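(* Let $\mathcal N$ be an $(M,N,q)$-Schreier norming set. Let $k\ge2$ and let $a_1,\dots,a_{k-1}$ be non-negative integers, not all zero. If $x_1^*,\dots,x_t^*\in\mathcal N$ is an $S_{\sum_{\ell<k}a_\ell n_{2\ell}}$-admissible block sequence and $(\beta_i)_{i=1}^t\in Ba(\ell_q)$, then $$\frac{1}{\prod_{\ell<k}m_{2\ell}^{a_\ell}}\sum_{i=1}^t\beta_ix_i^*\in\mathcal N.$$
   Context: Notation. $c_{00}$ is the space of finitely supported real sequences, $(e_i)_{i\ge1}$ its unit vector basis and $(e_i^* )_{i\ge1}$ the biorthogonal functionals. For a functional $x^*=\sum_i a_ie_i^*$, ${\rm supp}\,x^*=\{i:a_i\neq0\}$. For finite $E,F\subset\mathbb N$, $E<F$ means $\max E<\min F$. $Ba(\ell_q)$ is the closed unit ball of $\ell_q$ (applied to finite scalar sequences). For an interval $E\subset\mathbb N$, $Ex^*$ is the restriction of $x^*$ to the coordinates in $E$. Schreier families: $S_0=\{\{n\}:n\in\mathbb N\}\cup\{\emptyset\}$ and $S_{n+1}=\{\bigcup_{i=1}^mF_i: m\in\mathbb N,\ F_i\in S_n,\ m\le\min F_1,\ F_1<\dots<F_m\}\cup\{\emptyset\}$. Successive finite sets $E_1<\dots<E_k$ are $S_n$-admissible if $\{\min E_1,\dots,\min E_k\}\in S_n$; a finite block sequence $x_1^*,\dots,x_k^*$ (${\rm supp}\,x_1^*<\dots<{\rm supp}\,x_k^*$) is $S_n$-admissible if $({\rm supp}\,x_i^* )_{i=1}^k$ is.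 Sequences. $M=(m_i)$, $N=(n_i)$ are increasing sequences of positive integers such that (i) $m_1>3$, $m_2=m_1^5$, $m_{2j+1}=m_{2j}^5$ for $j\ge1$, and there is an increasing sequence $(s_i)$ of positive integers with $m_{2j}=\prod_{i=1}^{j-1}m_{2i}^{s_i}$ for $j\ge2$; (ii) defining for $j\ge2$ $f_j=\max\{\rho n_1+\sum_{1\le i<j}\rho_in_{2i}:\ \rho,\rho_i\in\mathbb N\cup\{0\},\ m_1^{\rho}\prod_{1\le i<j}m_{2i}^{\rho_i}<m_{2j}\}$, one has $4f_j<n_{2j}$ for all $j\ge2$, and $5n_1<n_2$. Norming sets. A set $\mathcal N\subset{\rm span}\{e_i^*\}$ is norming if it contains every $e_n^*$, satisfies $|x^*(e_n)|\le1$ for all $x^*\in\mathcal N$, $n\in\mathbb N$, is symmetric, and $Ex^*\in\mathcal N$ for all $x^*\in\mathcal N$ and intervals $E\subset\mathbb N$. $(M,N,q)$-Schreier. Let $1<p,q<\infty$, $1/p+1/q=1$. For $k\ge1$ let $\mathcal N_k$ be the set of all $\frac1{m_{2k}}\sum_{i=1}^d\gamma_ix_i^*$ where $d\in\mathbb N$, $(\gamma_i)_{i=1}^d\in Ba(\ell_q)$, and $x_1^*,\dots,x_d^*\in\mathcal N$ is an $S_{n_{2k}}$-admissible block sequence. Let $\mathcal N^q_\infty$ be the union over $k\ge0$ of the sets of all $\frac1{m_{2k+1}}\sum_{i=1}^d\gamma_iEx_i^*$ where $(\gamma_i)\in 2^{1/p}Ba(\ell_q)$, $E$ is an interval of $\mathbb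 N$, $x_1^*,\dots,x_d^*$ is an $S_{n_{2k+1}}$-admissible block sequence with $x_i^*\in\mathcal N_{j_i}$ and $j_1,\dots,j_d$ pairwise distinct. A norming set $\mathcal N$ is $(M,N,q)$-Schreier if $\mathcal N_j\subset\mathcal N$ for all $j\ge1$ and $\mathcal N\subset\bigcup_{j\ge1}\mathcal N_j\cup\mathcal N^q_\infty\cup\{\pm e_n^*:n\in\mathbb N\}$. *)

theory Defs
  imports Complex_Main
begin

text \<open>Functionals in span of the e_i^* are modelled as finitely supported functions
  nat \<Rightarrow> real vanishing at 0 (coordinates are indexed by positive integers).\<close>

type_synonym fnl = "nat \<Rightarrow> real"

definition supp :: "fnl \<Rightarrow> nat set" where
  "supp x = {i. x i \<noteq> 0}"

definition unit_fnl :: "nat \<Rightarrow> fnl" where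
  "unit_fnl n = (\<lambda>i. if i = n then 1 else 0)"

definition is_interval :: "nat set \<Rightarrow> bool" where
  "is_interval E \<longleftrightarrow> (\<forall>a b c. a \<in> E \<longrightarrow> c \<in> E \<longrightarrow> a \<le> b \<longrightarrow> b \<le> c \<longrightarrow> b \<in> E)"

definition restr :: "nat set \<Rightarrow> fnl \<Rightarrow> fnl" where
  "restr E x = (\<lambda>i. if i \<in> E then x i else 0)"

definition set_less :: "nat set \<Rightarrow> nat set \<Rightarrow> bool" where
  "set_less E F \<longleftrightarrow> (\<forall>a\<in>E. \<forall>b\<in>F. a < b)"

definition successive :: "nat set list \<Rightarrow> bool" where
  "successive Fs \<longleftrightarrow> (\<forall>i j. i < j \<longrightarrow> j < length Fs \<longrightarrow> set_less (Fs ! i) (Fs ! j))"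

fun schreier :: "nat \<Rightarrow> nat set set" where
  "schreier 0 = {{n} | n. n \<ge> 1} \<union> {{}}"
| "schreier (Suc n) =
     {\<Union> (set Fs) | Fs. Fs \<noteq> [] \<and> (\<forall>F \<in> set Fs. F \<in> schreier n \<and> F \<noteq> {})
        \<and> successive Fs \<and> length Fs \<le> Min (hd Fs)} \<union> {{}}"

text \<open>Block sequences and S_n-admissibility (zero functionals, having empty support,
  impose no constraint).\<close>
definition block_seq :: "fnl list \<Rightarrow> bool" where
  "block_seq xs \<longleftrightarrow> successive (map supp xs)"

definition admissible :: "nat \<Rightarrow> fnl list \<Rightarrow> bool" where
  "admissible n xs \<longleftrightarrow> block_seq xs \<and>
     {Min (supp x) | x. x \<in> set xs \<and> supp x \<noteq> {}} \<in> schreier n"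

definition in_ball :: "real \<Rightarrow> real \<Rightarrow> real list \<Rightarrow> bool" where
  "in_ball q c \<gamma> \<longleftrightarrow> (\<Sum>i<length \<gamma>. \<bar>\<gamma> ! i\<bar> powr q) powr (1 / q) \<le> c"

definition lin_comb :: "real list \<Rightarrow> fnl list \<Rightarrow> fnl" where
  "lin_comb \<gamma> xs = (\<lambda>j. \<Sum>i<length xs. \<gamma> ! i * (xs ! i) j)"

definition norming :: "fnl set \<Rightarrow> bool" where
  "norming NN \<longleftrightarrow>
     (\<forall>x\<in>NN. finite (supp x) \<and> x 0 = 0) \<and>
     (\<forall>n\<ge>1. unit_fnl n \<in> NN) \<and>
     (\<forall>x\<in>NN. \<forall>n. \<bar>x n\<bar> \<le> 1) \<and>
     (\<forall>x\<in>NN. (\<lambda>i. - x i) \<in> NN) \<and>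
     (\<forall>x\<in>NN. \<forall>E. is_interval E \<longrightarrow> restr E x \<in> NN)"

text \<open>The sets N_k (k \<ge> 1); sequences m, n are indexed from 1.\<close>
definition NN_k :: "(nat \<Rightarrow> nat) \<Rightarrow> (nat \<Rightarrow> nat) \<Rightarrow> real \<Rightarrow> fnl set \<Rightarrow> nat \<Rightarrow> fnl set" where
  "NN_k m n q NN k =
     {(\<lambda>j. (1 / real (m (2*k))) * lin_comb \<gamma> xs j) | \<gamma> xs.
        xs \<noteq> [] \<and> length \<gamma> = length xs \<and> in_ball q 1 \<gamma> \<and>
        set xs \<subseteq> NN \<and> admissible (n (2*k)) xs}"

definition NN_inf :: "(nat \<Rightarrow> nat) \<Rightarrow> (nat \<Rightarrow> nat) \<Rightarrow> real \<Rightarrow> fnl set \<Rightarrow> fnl set" where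
  "NN_inf m n q NN =
     (\<Union>k. {(\<lambda>j. (1 / real (m (2*k+1))) * lin_comb \<gamma> (map (restr E) xs) j) | \<gamma> E xs js.
        xs \<noteq> [] \<and> length \<gamma> = length xs \<and>
        in_ball q (2 powr (1 / (q / (q - 1)))) \<gamma> \<and>
        is_interval E \<and> admissible (n (2*k+1)) xs \<and>
        length js = length xs \<and> distinct js \<and>
        (\<forall>i<length xs. js ! i \<ge> 1 \<and> xs ! i \<in> NN_k m n q NN (js ! i))})"

definition schreier_norming :: "(nat \<Rightarrow> nat) \<Rightarrow> (nat \<Rightarrow> nat) \<Rightarrow> real \<Rightarrow> fnl set \<Rightarrow> bool" where
  "schreier_norming m n q NN \<longleftrightarrow> norming NN \<and>
     (\<forall>j\<ge>1. NN_k m n q NN j \<subseteq> NN) \<and>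
     NN \<subseteq> (\<Union>j\<in>{1..}. NN_k m n q NN j) \<union> NN_inf m n q NN \<union>
            {unit_fnl i | i. i \<ge> 1} \<union> {(\<lambda>t. - unit_fnl i t) | i. i \<ge> 1}"

definition f_seq :: "(nat \<Rightarrow> nat) \<Rightarrow> (nat \<Rightarrow> nat) \<Rightarrow> nat \<Rightarrow> nat" where
  "f_seq m n j = Max {\<rho> * n 1 + (\<Sum>i\<in>{1..<j}. \<rho>s i * n (2*i)) | \<rho> \<rho>s.
       m 1 ^ \<rho> * (\<Prod>i\<in>{1..<j}. m (2*i) ^ \<rho>s i) < m (2*j)}"

definition MN_sequences :: "(nat \<Rightarrow> nat) \<Rightarrow> (nat \<Rightarrow> nat) \<Rightarrow> bool" where
  "MN_sequences m n \<longleftrightarrow>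
     (\<forall>i\<ge>1. m i \<ge> 1 \<and> m i < m (Suc i) \<and> n i \<ge> 1 \<and> n i < n (Suc i)) \<and>
     m 1 > 3 \<and> m 2 = m 1 ^ 5 \<and> (\<forall>j\<ge>1. m (2*j+1) = m (2*j) ^ 5) \<and>
     (\<exists>s::nat \<Rightarrow> nat. (\<forall>i\<ge>1. s i \<ge> 1 \<and> s i < s (Suc i)) \<and>
        (\<forall>j\<ge>2. m (2*j) = (\<Prod>i\<in>{1..<j}. m (2*i) ^ s i))) \<and>
     (\<forall>j\<ge>2. 4 * f_seq m n j < n (2*j)) \<and> 5 * n 1 < n 2"

end

theory Submission
  imports Defs
begin

text \<open>
  We call NN closed at level (N, P) if for every
  block sequence x_1, ..., x_t in NN whose starting points form a set in S_N and every
  (b_i) in the unit ball of l_q, the functional (1/P) * sum b_i x_i lies again in NN.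
  By definition of N_l, NN is closed at level (n_{2l}, m_{2l}) for every l >= 1.
  The proof of the theorem rests on a composition law: closure at levels (a, P1) and (b, P2)
  implies closure at level (a + b, P1 * P2).  To see this, split the starting points of an
  S_{a+b}-admissible sequence into successive S_b sets whose minima form an S_a set
  (S_{a+b} = S_a[S_b]); normalise each group in l_q, average it with the inner closure,
  and average the resulting successive blocks with the outer closure.
  Writing m_2^{a_1} ... m_{2(k-1)}^{a_{k-1}} as a product of single factors m_{2l} and
  iterating the composition law gives the theorem.
\<close>

lemma successive_iff_sorted: "successive Fs \<longleftrightarrow> sorted_wrt set_less Fs"
  unfolding successive_def sorted_wrt_iff_nth_less by blast

lemma set_less_mono: "set_less A B \<Longrightarrow> A' \<subseteq> A \<Longrightarrow> B' \<subseteq> B \<Longrightarrow> set_less A' B'"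
  unfolding set_less_def by blast

lemma schreier_finite_pos: "F \<in> schreier n \<Longrightarrow> finite F \<and> (\<forall>x\<in>F. 1 \<le> x)"
  by (induction n arbitrary: F) auto

lemma schreier_SucE:
  assumes "F \<in> schreier (Suc n)" "F \<noteq> {}"
  obtains Fs where "F = \<Union>(set Fs)" "Fs \<noteq> []" "\<forall>G\<in>set Fs. G \<in> schreier n \<and> G \<noteq> {}"
    "sorted_wrt set_less Fs" "length Fs \<le> Min (hd Fs)"
  using assms by (auto simp: successive_iff_sorted)

lemma Min_hd_le:
  assumes "sorted_wrt set_less Fs" "\<forall>G\<in>set Fs. finite G \<and> G \<noteq> {}" "x \<in> \<Union>(set Fs)"
  shows "Min (hd Fs) \<le> x"
proof (cases Fs)
  case Nil then show ?thesis using assms by simp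
next
  case (Cons G Gs)
  have G: "finite G" "G \<noteq> {}" using assms(2) Cons by auto
  show ?thesis
  proof (cases "x \<in> G")
    case False
    then obtain H where "H \<in> set Gs" "x \<in> H" using assms(3) Cons by auto
    then have "set_less G H" using assms(1) Cons by simp
    then show ?thesis using Min_in[OF G] \<open>x \<in> H\<close> Cons unfolding set_less_def by force
  qed (use G Cons in simp)
qed

lemma schreier_SucI_dominated:
  assumes Ms: "Ms \<noteq> []" "\<forall>M\<in>set Ms. M \<in> schreier n \<and> M \<noteq> {}" "sorted_wrt set_less Ms"
    and Fs: "sorted_wrt set_less Fs" "\<forall>G\<in>set Fs. finite G \<and> G \<noteq> {}" "length Fs \<le> Min (hd Fs)"
    and le: "length Ms \<le> length Fs" and sub: "\<Union>(set Ms) \<subseteq> \<Union>(set Fs)"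
  shows "\<Union>(set Ms) \<in> schreier (Suc n)"
proof -
  have "hd Ms \<in> set Ms" using Ms(1) by simp
  moreover have "finite (hd Ms)" "hd Ms \<noteq> {}"
    using Ms(2) \<open>hd Ms \<in> set Ms\<close> schreier_finite_pos by auto
  ultimately have "Min (hd Ms) \<in> \<Union>(set Fs)" using sub Min_in by blast
  then have "Min (hd Fs) \<le> Min (hd Ms)" using Min_hd_le[OF Fs(1,2)] by blast
  then have "length Ms \<le> Min (hd Ms)" using le Fs(3) by linarith
  then show ?thesis using Ms by (auto simp: successive_iff_sorted)
qed

lemma schreier_hereditary: "F \<in> schreier n \<Longrightarrow> A \<subseteq> F \<Longrightarrow> A \<in> schreier n"
proof (induction n arbitrary: F A)
  case 0 then show ?case by (auto simp: subset_singleton_iff)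
next
  case (Suc n)
  show ?case
  proof (cases "A = {}")
    case False
    then obtain Fs where Fs: "F = \<Union>(set Fs)" "Fs \<noteq> []" "\<forall>G\<in>set Fs. G \<in> schreier n \<and> G \<noteq> {}"
      "sorted_wrt set_less Fs" "length Fs \<le> Min (hd Fs)"
      using Suc.prems False by (elim schreier_SucE) auto
    define Ms where "Ms = filter (\<lambda>G. G \<noteq> {}) (map (\<lambda>G. G \<inter> A) Fs)"
    have A: "A = \<Union>(set Ms)" unfolding Ms_def using Suc.prems(2) Fs(1) by auto blast
    have "sorted_wrt set_less (map (\<lambda>G. G \<inter> A) Fs)"
      unfolding sorted_wrt_map using Fs(4)
      by (rule sorted_wrt_mono_rel[rotated]) (auto elim: set_less_mono)
    then have "sorted_wrt set_less Ms" unfolding Ms_def by (rule sorted_wrt_filter)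
    moreover have "length Ms \<le> length Fs" unfolding Ms_def
      by (metis length_filter_le length_map)
    moreover have "\<forall>M\<in>set Ms. M \<in> schreier n \<and> M \<noteq> {}" unfolding Ms_def using Fs(3) Suc.IH by auto
    ultimately show ?thesis
      using A False Fs schreier_finite_pos Suc.prems(2)
      by (intro schreier_SucI_dominated[of Ms n Fs, folded A]) auto
  qed simp
qed

text \<open>A decomposition of F witnessing F in S_a[S_b]: successive nonempty S_b sets covering F
  whose minima form an S_a set.\<close>
definition schreier_decomposition :: "nat set list \<Rightarrow> nat set \<Rightarrow> nat \<Rightarrow> nat \<Rightarrow> bool" where
  "schreier_decomposition Gs F b a \<longleftrightarrow>
     (\<forall>G\<in>set Gs. G \<noteq> {} \<and> G \<in> schreier b) \<and> sorted_wrt set_less Gs \<and>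
     \<Union>(set Gs) = F \<and> Min ` set Gs \<in> schreier a"

lemma sorted_concat_refinement:
  assumes "sorted_wrt set_less Fs"
    and "\<forall>F\<in>set Fs. sorted_wrt set_less (f F) \<and> (\<forall>G\<in>set (f F). G \<subseteq> F)"
  shows "sorted_wrt set_less (concat (map f Fs))"
  using assms
proof (induction Fs)
  case (Cons F Fs)
  have "set_less G H" if "G \<in> set (f F)" "F' \<in> set Fs" "H \<in> set (f F')" for G H F'
    using Cons.prems that set_less_mono[of F F' G H] by auto
  then show ?case using Cons by (auto simp: sorted_wrt_append)
qed simp

lemma decomposition_mins_subset:
  assumes "schreier_decomposition Gs F b a"
  shows "Min ` set Gs \<subseteq> F"
proof
  fix x assume "x \<in> Min ` set Gs"
  then obtain G where G: "G \<in> set Gs" "x = Min G" by auto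
  then have "finite G" "G \<noteq> {}" "G \<subseteq> F"
    using assms schreier_finite_pos unfolding schreier_decomposition_def by auto
  then show "x \<in> F" using G Min_in by blast
qed

lemma schreier_decomposition_concat:
  assumes Fs: "Fs \<noteq> []" "\<forall>G\<in>set Fs. finite G \<and> G \<noteq> {}" "sorted_wrt set_less Fs"
      "length Fs \<le> Min (hd Fs)"
    and dec: "\<forall>G\<in>set Fs. schreier_decomposition (dec G) G b a"
  shows "schreier_decomposition (concat (map dec Fs)) (\<Union>(set Fs)) b (Suc a)"
proof -
  define Gs where "Gs = concat (map dec Fs)"
  define Ms where "Ms = map (\<lambda>G. Min ` set (dec G)) Fs"
  have "sorted_wrt set_less Gs"
    unfolding Gs_def using Fs(3) dec
    by (intro sorted_concat_refinement) (auto simp: schreier_decomposition_def)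
  moreover have "\<Union>(set Gs) = \<Union>(set Fs)"
  proof -
    have "\<Union>(set (dec G)) = G" if "G \<in> set Fs" for G
      using dec that unfolding schreier_decomposition_def by blast
    then have "(\<Union>G\<in>set Fs. \<Union>(set (dec G))) = \<Union>(set Fs)" by simp
    moreover have "\<Union>(set Gs) = (\<Union>G\<in>set Fs. \<Union>(set (dec G)))" unfolding Gs_def by auto
    ultimately show ?thesis by simp
  qed
  moreover have "\<forall>G\<in>set Gs. G \<noteq> {} \<and> G \<in> schreier b"
    using dec unfolding Gs_def schreier_decomposition_def by auto
  moreover have "Min ` set Gs \<in> schreier (Suc a)"
  proof -
    have mins: "\<Union>(set Ms) = Min ` set Gs" unfolding Ms_def Gs_def by auto
    have sub: "\<forall>G\<in>set Fs. Min ` set (dec G) \<subseteq> G"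
      using dec decomposition_mins_subset by blast
    have "set_less (Min ` set (dec G)) (Min ` set (dec H))"
      if "G \<in> set Fs" "H \<in> set Fs" "set_less G H" for G H
      using set_less_mono[OF that(3)] sub that by blast
    then have "sorted_wrt set_less Ms"
      unfolding Ms_def sorted_wrt_map by (rule sorted_wrt_mono_rel[OF _ Fs(3)])
    moreover have "\<forall>M\<in>set Ms. M \<in> schreier a \<and> M \<noteq> {}"
    proof -
      have "dec G \<noteq> []" if "G \<in> set Fs" for G
        using dec Fs(2) that unfolding schreier_decomposition_def by force
      then show ?thesis using dec unfolding Ms_def schreier_decomposition_def by auto
    qed
    moreover have "\<Union>(set Ms) \<subseteq> \<Union>(set Fs)" using sub unfolding Ms_def by auto
    moreover have "Ms \<noteq> []" "length Ms \<le> length Fs" using Fs(1) unfolding Ms_def by auto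
    ultimately show ?thesis
      unfolding mins[symmetric] using Fs(2-4) by (intro schreier_SucI_dominated) auto
  qed
  ultimately show ?thesis unfolding schreier_decomposition_def Gs_def by blast
qed

lemma schreier_decomposition_exists:
  "F \<in> schreier (a + b) \<Longrightarrow> \<exists>Gs. schreier_decomposition Gs F b a"
proof (induction a arbitrary: F)
  case 0
  show ?case
  proof (cases "F = {}")
    case False
    then have "Min F \<in> F" using 0 schreier_finite_pos by auto
    then have "{Min F} \<in> schreier 0" using 0 schreier_finite_pos by auto
    then show ?thesis
      using False 0 by (intro exI[of _ "[F]"]) (auto simp: schreier_decomposition_def)
  qed (auto intro: exI[of _ "[]"] simp: schreier_decomposition_def)
next
  case (Suc a)
  show ?case
  proof (cases "F = {}")
    case False
    have "F \<in> schreier (Suc (a + b))" using Suc.prems by simp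
    then obtain Fs where Fs: "F = \<Union>(set Fs)" "Fs \<noteq> []" "\<forall>G\<in>set Fs. G \<in> schreier (a + b) \<and> G \<noteq> {}"
      "sorted_wrt set_less Fs" "length Fs \<le> Min (hd Fs)"
      using False by (rule schreier_SucE)
    obtain dec where "\<forall>G\<in>set Fs. schreier_decomposition (dec G) G b a"
      using Suc.IH Fs(3) by metis
    moreover have "\<forall>G\<in>set Fs. finite G \<and> G \<noteq> {}" using Fs(3) schreier_finite_pos by blast
    ultimately show ?thesis
      using schreier_decomposition_concat[of Fs] Fs by blast
  qed (auto intro: exI[of _ "[]"] simp: schreier_decomposition_def)
qed

definition comb :: "(real \<times> fnl) list \<Rightarrow> fnl" where
  "comb ps = (\<lambda>j. \<Sum>p\<leftarrow>ps. fst p * snd p j)"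

definition qmass :: "real \<Rightarrow> (real \<times> fnl) list \<Rightarrow> real" where
  "qmass q ps = (\<Sum>p\<leftarrow>ps. \<bar>fst p\<bar> powr q)"

definition rescale :: "real \<Rightarrow> (real \<times> fnl) list \<Rightarrow> (real \<times> fnl) list" where
  "rescale c ps = map (\<lambda>p. (c * fst p, snd p)) ps"

definition precedes :: "real \<times> fnl \<Rightarrow> real \<times> fnl \<Rightarrow> bool" where
  "precedes p p' \<longleftrightarrow> set_less (supp (snd p)) (supp (snd p'))"

definition start :: "real \<times> fnl \<Rightarrow> nat" where
  "start p = Min (supp (snd p))"

definition nondegenerate :: "(real \<times> fnl) list \<Rightarrow> bool" where
  "nondegenerate ps \<longleftrightarrow> (\<forall>p\<in>set ps. fst p \<noteq> 0 \<and> supp (snd p) \<noteq> {} \<and> finite (supp (snd p)))"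

definition block_family :: "fnl set \<Rightarrow> real \<Rightarrow> (real \<times> fnl) list \<Rightarrow> bool" where
  "block_family NN q ps \<longleftrightarrow> set (map snd ps) \<subseteq> NN \<and> nondegenerate ps \<and>
     sorted_wrt precedes ps \<and> qmass q ps \<le> 1"

lemma sorted_precedes_iff:
  "sorted_wrt precedes ps \<longleftrightarrow> sorted_wrt set_less (map (\<lambda>p. supp (snd p)) ps)"
  by (simp add: sorted_wrt_map precedes_def[abs_def])

lemma sum_list_map_concat:
  "(\<Sum>x\<leftarrow>concat xss. f x) = (\<Sum>xs\<leftarrow>xss. \<Sum>x\<leftarrow>xs. f x)" for f :: "'a \<Rightarrow> 'b::comm_monoid_add"
  by (induction xss) auto

lemma comb_concat: "comb (concat pss) j = (\<Sum>ps\<leftarrow>pss. comb ps j)"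
  unfolding comb_def by (simp add: sum_list_map_concat)

lemma qmass_concat: "qmass q (concat pss) = (\<Sum>ps\<leftarrow>pss. qmass q ps)"
  unfolding qmass_def by (simp add: sum_list_map_concat)

lemma comb_rescale: "comb (rescale c ps) j = c * comb ps j"
  unfolding comb_def rescale_def by (simp add: o_def mult.assoc sum_list_const_mult)

lemma qmass_rescale: "qmass q (rescale c ps) = \<bar>c\<bar> powr q * qmass q ps"
  unfolding qmass_def rescale_def by (simp add: o_def abs_mult powr_mult sum_list_const_mult)

lemma qmass_pos:
  assumes "nondegenerate ps" "ps \<noteq> []"
  shows "0 < qmass q ps"
proof -
  obtain p ps' where ps: "ps = p # ps'" using assms(2) by (cases ps) auto
  have "0 < \<bar>fst p\<bar> powr q" using assms(1) ps unfolding nondegenerate_def by simp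
  moreover have "0 \<le> qmass q ps'" unfolding qmass_def by (intro sum_list_nonneg) auto
  moreover have "qmass q ps = \<bar>fst p\<bar> powr q + qmass q ps'" unfolding ps qmass_def by simp
  ultimately show ?thesis by linarith
qed

lemma lin_comb_eq_comb: "length \<gamma> = length xs \<Longrightarrow> lin_comb \<gamma> xs = comb (zip \<gamma> xs)"
  unfolding lin_comb_def comb_def by (auto simp: sum_list_sum_nth atLeast0LessThan)

lemma powr_inverse_le_one_iff:
  fixes x q :: real
  assumes "0 \<le> x" "0 < q"
  shows "x powr (1/q) \<le> 1 \<longleftrightarrow> x \<le> 1"
proof
  assume "x powr (1/q) \<le> 1"
  then have "(x powr (1/q)) powr q \<le> 1 powr q" using powr_mono2[of q "x powr (1/q)" 1] assms by simp
  then show "x \<le> 1" using assms by (simp add: powr_powr)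
qed (use assms in \<open>simp add: powr_le1\<close>)

lemma in_ball_iff_qmass: "0 < q \<Longrightarrow> in_ball q 1 (map fst ps) \<longleftrightarrow> qmass q ps \<le> 1"
  unfolding in_ball_def qmass_def
  by (simp add: sum_list_sum_nth atLeast0LessThan powr_inverse_le_one_iff sum_nonneg)

lemma sorted_wrt_total:
  "sorted_wrt R xs \<Longrightarrow> x \<in> set xs \<Longrightarrow> y \<in> set xs \<Longrightarrow> x = y \<or> R x y \<or> R y x"
  by (induction xs) auto

lemma start_in_supp: "nondegenerate ps \<Longrightarrow> p \<in> set ps \<Longrightarrow> start p \<in> supp (snd p)"
  unfolding nondegenerate_def start_def by (auto intro: Min_in)

lemma start_le: "nondegenerate ps \<Longrightarrow> p \<in> set ps \<Longrightarrow> s \<in> supp (snd p) \<Longrightarrow> start p \<le> s"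
  unfolding nondegenerate_def start_def by auto

lemma precedes_if_start_less:
  assumes "sorted_wrt precedes ps" "nondegenerate ps" "p \<in> set ps" "p' \<in> set ps"
    and "start p < start p'"
  shows "precedes p p'"
proof -
  have "start p' < start p" if "precedes p' p"
    using that start_in_supp[OF assms(2) assms(3)] start_in_supp[OF assms(2) assms(4)]
    unfolding precedes_def set_less_def by blast
  then have "\<not> precedes p' p" using assms(5) by auto
  then show ?thesis using sorted_wrt_total[OF assms(1,3,4)] assms(5) by auto
qed

lemma sorted_by_start:
  assumes "sorted_wrt precedes ps" "nondegenerate ps"
  shows "sorted_wrt (\<lambda>p p'. start p < start p') ps"
proof (rule sorted_wrt_mono_rel[OF _ assms(1)])
  fix p p' assume "p \<in> set ps" "p' \<in> set ps" "precedes p p'"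
  then show "start p < start p'"
    using start_in_supp[OF assms(2)] unfolding precedes_def set_less_def by blast
qed

lemma comb_at_support:
  assumes "sorted_wrt precedes ps" "p \<in> set ps" "s \<in> supp (snd p)"
  shows "comb ps s = fst p * snd p s"
proof -
  obtain xs ys where ps: "ps = xs @ p # ys" using split_list assms(2) by metis
  have vanish: "snd r s = 0" if "r \<in> set xs \<union> set ys" for r
  proof -
    have "precedes r p \<or> precedes p r" using assms(1) that unfolding ps by (auto simp: sorted_wrt_append)
    then have "s \<notin> supp (snd r)" using assms(3) unfolding precedes_def set_less_def by blast
    then show ?thesis unfolding supp_def by simp
  qed
  have zero: "(\<Sum>r\<leftarrow>rs. fst r * snd r s) = 0" if "set rs \<subseteq> set xs \<union> set ys" for rs
    using that vanish by (induction rs) auto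
  show ?thesis unfolding ps comb_def using zero[of xs] zero[of ys] by simp
qed

lemma supp_comb_subset: "supp (comb ps) \<subseteq> (\<Union>p\<in>set ps. supp (snd p))"
  unfolding supp_def comb_def by (induction ps) auto

lemma supp_comb:
  assumes "ps \<noteq> []" "sorted_wrt precedes ps" "nondegenerate ps"
  shows "finite (supp (comb ps))" "start ` set ps \<subseteq> supp (comb ps)"
    and "Min (supp (comb ps)) = Min (start ` set ps)"
proof -
  have "finite (\<Union>p\<in>set ps. supp (snd p))" using assms(3) unfolding nondegenerate_def by auto
  then show fin: "finite (supp (comb ps))" by (rule finite_subset[OF supp_comb_subset])
  show starts: "start ` set ps \<subseteq> supp (comb ps)"
  proof
    fix s assume "s \<in> start ` set ps"
    then obtain p where p: "p \<in> set ps" "s = start p" by auto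
    then have "s \<in> supp (snd p)" "fst p \<noteq> 0"
      using start_in_supp[OF assms(3)] assms(3) unfolding nondegenerate_def by auto
    then show "s \<in> supp (comb ps)"
      using comb_at_support[OF assms(2) p(1)] unfolding supp_def by simp
  qed
  have ne: "start ` set ps \<noteq> {}" using assms(1) by simp
  have "Min (supp (comb ps)) \<in> supp (comb ps)" using fin starts ne by (intro Min_in) auto
  then obtain p where p: "p \<in> set ps" "Min (supp (comb ps)) \<in> supp (snd p)"
    using supp_comb_subset by blast
  then have "Min (start ` set ps) \<le> Min (supp (comb ps))"
    using start_le[OF assms(3)] by (meson Min_le finite_imageI finite_set imageI le_trans)
  moreover have "Min (supp (comb ps)) \<le> Min (start ` set ps)"
    using Min_antimono[OF starts ne fin] .
  ultimately show "Min (supp (comb ps)) = Min (start ` set ps)" by simp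
qed

lemma filter_append_filter_not:
  "sorted_wrt (\<lambda>x y. P y \<longrightarrow> P x) xs \<Longrightarrow> filter P xs @ filter (\<lambda>x. \<not> P x) xs = xs"
  by (induction xs) auto

lemma concat_filter_partition:
  assumes "sorted_wrt (\<lambda>x y. f x < (f y :: nat)) xs" "sorted_wrt set_less Gs"
    and "\<forall>x\<in>set xs. f x \<in> \<Union>(set Gs)"
  shows "concat (map (\<lambda>G. filter (\<lambda>x. f x \<in> G) xs) Gs) = xs"
  using assms
proof (induction Gs arbitrary: xs)
  case (Cons G Gs)
  let ?rest = "filter (\<lambda>x. f x \<notin> G) xs"
  have "sorted_wrt (\<lambda>x y. f y \<in> G \<longrightarrow> f x \<in> G) xs"
  proof (rule sorted_wrt_mono_rel[OF _ Cons.prems(1)], intro impI)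
    fix x y assume x: "x \<in> set xs" and less: "f x < f y" and y: "f y \<in> G"
    show "f x \<in> G"
    proof (rule ccontr)
      assume "f x \<notin> G"
      then obtain H where "H \<in> set Gs" "f x \<in> H" using Cons.prems(3) x by auto
      then have "f y < f x" using Cons.prems(2) y unfolding set_less_def by auto
      then show False using less by simp
    qed
  qed
  then have split: "filter (\<lambda>x. f x \<in> G) xs @ ?rest = xs" by (rule filter_append_filter_not)
  have "filter (\<lambda>x. f x \<in> H) ?rest = filter (\<lambda>x. f x \<in> H) xs" if "H \<in> set Gs" for H
  proof -
    have "set_less G H" using Cons.prems(2) that by simp
    then have "G \<inter> H = {}" unfolding set_less_def by (meson disjoint_iff less_irrefl)
    then show ?thesis by (auto simp: filter_filter intro!: filter_cong)
  qed
  moreover have "concat (map (\<lambda>H. filter (\<lambda>x. f x \<in> H) ?rest) Gs) = ?rest"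
    using Cons.prems by (intro Cons.IH) (auto intro: sorted_wrt_filter)
  ultimately have "concat (map (\<lambda>H. filter (\<lambda>x. f x \<in> H) xs) Gs) = ?rest"
    by (metis (no_types, lifting) map_cong)
  then show ?case using split by simp
qed simp

definition group_of :: "(real \<times> fnl) list \<Rightarrow> nat set \<Rightarrow> (real \<times> fnl) list" where
  "group_of ps G = filter (\<lambda>p. start p \<in> G) ps"

lemma group_of_subfamily:
  shows "set (group_of ps G) \<subseteq> set ps"
    and "nondegenerate ps \<Longrightarrow> nondegenerate (group_of ps G)"
    and "sorted_wrt precedes ps \<Longrightarrow> sorted_wrt precedes (group_of ps G)"
  unfolding group_of_def nondegenerate_def by (auto intro: sorted_wrt_filter)

lemma concat_groups:
  assumes "sorted_wrt precedes ps" "nondegenerate ps" "sorted_wrt set_less Gs"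
    and "\<Union>(set Gs) = start ` set ps"
  shows "concat (map (group_of ps) Gs) = ps"
  unfolding group_of_def using sorted_by_start[OF assms(1,2)] assms(3,4)
  by (intro concat_filter_partition) auto

lemma sorted_group_supports:
  assumes "sorted_wrt precedes ps" "nondegenerate ps" "sorted_wrt set_less Gs"
  shows "sorted_wrt set_less (map (\<lambda>G. supp (comb (group_of ps G))) Gs)"
  unfolding sorted_wrt_map
proof (rule sorted_wrt_mono_rel[OF _ assms(3)])
  fix G G' assume "G \<in> set Gs" "G' \<in> set Gs" and GG': "set_less G G'"
  show "set_less (supp (comb (group_of ps G))) (supp (comb (group_of ps G')))"
    unfolding set_less_def
  proof (intro ballI)
    fix s s' assume s: "s \<in> supp (comb (group_of ps G))" and s': "s' \<in> supp (comb (group_of ps G'))"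
    obtain p where p: "p \<in> set ps" "start p \<in> G" "s \<in> supp (snd p)"
      using supp_comb_subset s unfolding group_of_def by fastforce
    obtain p' where p': "p' \<in> set ps" "start p' \<in> G'" "s' \<in> supp (snd p')"
      using supp_comb_subset s' unfolding group_of_def by fastforce
    have "start p < start p'" using p(2) p'(2) GG' unfolding set_less_def by blast
    then have "precedes p p'" by (rule precedes_if_start_less[OF assms(1,2) p(1) p'(1)])
    then show "s < s'" using p p' unfolding precedes_def set_less_def by blast
  qed
qed

definition schreier_closed :: "fnl set \<Rightarrow> real \<Rightarrow> nat \<Rightarrow> real \<Rightarrow> bool" where
  "schreier_closed NN q N P \<longleftrightarrow>
     (\<forall>ps. ps \<noteq> [] \<longrightarrow> block_family NN q ps \<longrightarrow> start ` set ps \<in> schreier N \<longrightarrow>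
        (\<lambda>j. comb ps j / P) \<in> NN)"

lemma schreier_closed_level:
  assumes "schreier_norming m n q NN" "0 < q" "1 \<le> l"
  shows "schreier_closed NN q (n (2*l)) (m (2*l))"
  unfolding schreier_closed_def
proof (intro allI impI)
  fix ps assume ne: "ps \<noteq> []" and bf: "block_family NN q ps" and S: "start ` set ps \<in> schreier (n (2*l))"
  have "block_seq (map snd ps)"
    using bf unfolding block_family_def block_seq_def successive_iff_sorted
    by (simp add: sorted_precedes_iff o_def)
  moreover have "{Min (supp x) | x. x \<in> set (map snd ps) \<and> supp x \<noteq> {}} = start ` set ps"
    using bf unfolding block_family_def nondegenerate_def start_def by auto
  ultimately have "admissible (n (2*l)) (map snd ps)" using S unfolding admissible_def by simp
  moreover have "in_ball q 1 (map fst ps)" using bf assms(2) in_ball_iff_qmass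
    unfolding block_family_def by blast
  moreover have "lin_comb (map fst ps) (map snd ps) = comb ps"
    using lin_comb_eq_comb[of "map fst ps" "map snd ps"] by (simp add: zip_map_fst_snd)
  ultimately have "(\<lambda>j. (1 / real (m (2*l))) * comb ps j) \<in> NN_k m n q NN l"
    using ne bf unfolding NN_k_def block_family_def
    by (intro CollectI exI[of _ "map fst ps"] exI[of _ "map snd ps"]) auto
  then show "(\<lambda>j. comb ps j / m (2*l)) \<in> NN" using assms(1,3) unfolding schreier_norming_def by auto
qed

lemma normalized_average:
  assumes closed: "schreier_closed NN q N P" and q: "0 < q" and ne: "ps \<noteq> []"
    and ps: "set (map snd ps) \<subseteq> NN" "nondegenerate ps" "sorted_wrt precedes ps"
    and S: "start ` set ps \<in> schreier N"
  shows "(\<lambda>j. comb ps j / (qmass q ps powr (1/q) * P)) \<in> NN"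
proof -
  define \<gamma> where "\<gamma> = qmass q ps powr (1/q)"
  have mass: "0 < qmass q ps" using qmass_pos[OF ps(2) ne] .
  then have \<gamma>: "0 < \<gamma>" "\<gamma> powr q = qmass q ps" unfolding \<gamma>_def using q by (simp_all add: powr_powr)
  let ?ps' = "rescale (1 / \<gamma>) ps"
  have "qmass q ?ps' = 1"
    using \<gamma> mass by (simp add: qmass_rescale powr_divide)
  moreover have "set (map snd ?ps') \<subseteq> NN" "nondegenerate ?ps'" "sorted_wrt precedes ?ps'"
    "start ` set ?ps' = start ` set ps"
    using ps \<gamma>(1) unfolding rescale_def nondegenerate_def
    by (auto simp: o_def sorted_precedes_iff start_def image_image)
  ultimately have "block_family NN q ?ps'" "start ` set ?ps' \<in> schreier N"
    using S unfolding block_family_def by auto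
  moreover have "?ps' \<noteq> []" using ne by (simp add: rescale_def)
  ultimately have "(\<lambda>j. comb ?ps' j / P) \<in> NN" using closed unfolding schreier_closed_def by blast
  then show ?thesis by (simp add: comb_rescale \<gamma>_def)
qed

lemma comb_regroup:
  assumes "\<forall>G\<in>set Gs. \<gamma> G \<noteq> 0"
  shows "comb (map (\<lambda>G. (\<gamma> G, \<lambda>j. comb (f G) j / (\<gamma> G * c))) Gs) j = comb (concat (map f Gs)) j / c"
proof -
  have "comb (map (\<lambda>G. (\<gamma> G, \<lambda>j. comb (f G) j / (\<gamma> G * c))) Gs) j = (\<Sum>G\<leftarrow>Gs. comb (f G) j / c)"
    unfolding comb_def using assms by (simp add: o_def cong: map_cong)
  also have "\<dots> = (\<Sum>G\<leftarrow>Gs. comb (f G) j) / c"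
    by (induction Gs) (simp_all add: add_divide_distrib)
  finally show ?thesis by (simp add: comb_concat o_def)
qed

lemma qmass_regroup:
  assumes "\<forall>G\<in>set Gs. 0 < \<gamma> G \<and> \<gamma> G powr q = qmass q (f G)"
  shows "qmass q (map (\<lambda>G. (\<gamma> G, Y G)) Gs) = qmass q (concat (map f Gs))"
proof -
  have "qmass q (map (\<lambda>G. (\<gamma> G, Y G)) Gs) = (\<Sum>G\<leftarrow>Gs. \<bar>\<gamma> G\<bar> powr q)"
    unfolding qmass_def by (simp add: o_def)
  also have "\<dots> = (\<Sum>G\<leftarrow>Gs. qmass q (f G))"
    using assms by (intro arg_cong[where f = sum_list] map_cong refl) auto
  finally show ?thesis by (simp add: qmass_concat o_def)
qed

lemma group_of_nonempty:
  assumes "G \<subseteq> start ` set ps" "G \<noteq> {}"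
  shows "group_of ps G \<noteq> []" "start ` set (group_of ps G) = G"
proof -
  show starts: "start ` set (group_of ps G) = G" using assms(1) unfolding group_of_def by force
  then show "group_of ps G \<noteq> []" using assms(2) by auto
qed

lemma regrouped_block_family:
  assumes ps: "nondegenerate ps" "sorted_wrt precedes ps" "qmass q ps \<le> 1"
    and Gs: "sorted_wrt set_less Gs" "\<forall>G\<in>set Gs. G \<noteq> {}" "\<Union>(set Gs) = start ` set ps"
    and Y: "\<forall>G\<in>set Gs. Y G \<in> NN \<and> supp (Y G) = supp (comb (group_of ps G))"
    and \<gamma>: "\<forall>G\<in>set Gs. 0 < \<gamma> G \<and> \<gamma> G powr q = qmass q (group_of ps G)"
  shows "block_family NN q (map (\<lambda>G. (\<gamma> G, Y G)) Gs)"
    and "start ` set (map (\<lambda>G. (\<gamma> G, Y G)) Gs) = Min ` set Gs"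
proof -
  let ?os = "map (\<lambda>G. (\<gamma> G, Y G)) Gs"
  have supp_Y: "supp (Y G) \<noteq> {} \<and> finite (supp (Y G)) \<and> Min (supp (Y G)) = Min G"
    if "G \<in> set Gs" for G
  proof -
    have "G \<subseteq> start ` set ps" "G \<noteq> {}" using Gs(2,3) that by auto
    note grp = group_of_nonempty[OF this]
    show ?thesis
      using supp_comb[OF grp(1) group_of_subfamily(3)[OF ps(2)] group_of_subfamily(2)[OF ps(1)]]
        grp Y that by auto
  qed
  show "block_family NN q ?os"
    unfolding block_family_def
  proof (intro conjI)
    show "set (map snd ?os) \<subseteq> NN" using Y by auto
    show "nondegenerate ?os" unfolding nondegenerate_def using \<gamma> supp_Y by fastforce
    show "sorted_wrt precedes ?os"
      using sorted_group_supports[OF ps(2,1) Gs(1)] Y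
      unfolding sorted_precedes_iff by (simp add: o_def cong: map_cong)
    show "qmass q ?os \<le> 1"
      using qmass_regroup[of Gs \<gamma> q "group_of ps" Y] \<gamma> concat_groups[OF ps(2,1) Gs(1,3)] ps(3)
      by simp
  qed
  show "start ` set ?os = Min ` set Gs"
    unfolding start_def using supp_Y by (simp add: image_image cong: image_cong)
qed

lemma schreier_closed_compose:
  assumes q: "0 < q" and outer: "schreier_closed NN q a P1"
    and inner: "schreier_closed NN q b P2" and P2: "0 < P2"
  shows "schreier_closed NN q (a + b) (P1 * P2)"
  unfolding schreier_closed_def
proof (intro allI impI)
  fix ps assume ne: "ps \<noteq> []" and bf: "block_family NN q ps" and S: "start ` set ps \<in> schreier (a + b)"
  have ps: "set (map snd ps) \<subseteq> NN" "nondegenerate ps" "sorted_wrt precedes ps" "qmass q ps \<le> 1"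
    using bf unfolding block_family_def by auto
  obtain Gs where Gs: "\<forall>G\<in>set Gs. G \<noteq> {} \<and> G \<in> schreier b" "sorted_wrt set_less Gs"
      "\<Union>(set Gs) = start ` set ps" "Min ` set Gs \<in> schreier a"
    using schreier_decomposition_exists[OF S] unfolding schreier_decomposition_def by blast
  define \<gamma> where "\<gamma> G = qmass q (group_of ps G) powr (1/q)" for G
  define Y where "Y G = (\<lambda>j. comb (group_of ps G) j / (\<gamma> G * P2))" for G
  have grp: "group_of ps G \<noteq> []" "start ` set (group_of ps G) = G" if "G \<in> set Gs" for G
  proof -
    have "G \<subseteq> start ` set ps" "G \<noteq> {}" using Gs(1,3) that by auto
    then show "group_of ps G \<noteq> []" "start ` set (group_of ps G) = G" by (rule group_of_nonempty)+
  qed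
  have grp_family: "set (map snd (group_of ps G)) \<subseteq> NN" "nondegenerate (group_of ps G)"
    "sorted_wrt precedes (group_of ps G)" for G
    using ps(1) group_of_subfamily[of ps G] ps(2,3) by auto
  have \<gamma>: "\<forall>G\<in>set Gs. 0 < \<gamma> G \<and> \<gamma> G powr q = qmass q (group_of ps G)"
    using qmass_pos[OF grp_family(2) grp(1), of _ q] q unfolding \<gamma>_def
    by (simp add: powr_powr less_imp_neq[symmetric] order.strict_implies_order)
  have Y: "\<forall>G\<in>set Gs. Y G \<in> NN \<and> supp (Y G) = supp (comb (group_of ps G))"
    using normalized_average[OF inner q grp(1) grp_family(1-3)] Gs(1) grp(2) \<gamma> P2
    unfolding Y_def \<gamma>_def supp_def by auto
  define os where "os = map (\<lambda>G. (\<gamma> G, Y G)) Gs"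
  have "\<forall>G\<in>set Gs. \<gamma> G \<noteq> 0" using \<gamma> by auto
  then have comb_os: "comb os j = comb ps j / P2" for j
    using comb_regroup[of Gs \<gamma> "group_of ps" P2 j] concat_groups[OF ps(3,2) Gs(2,3)]
    unfolding os_def Y_def by simp
  have "\<forall>G\<in>set Gs. G \<noteq> {}" using Gs(1) by blast
  from regrouped_block_family[OF ps(2-4) Gs(2) this Gs(3) Y \<gamma>]
  have "block_family NN q os" "start ` set os \<in> schreier a"
    using Gs(4) unfolding os_def by simp_all
  moreover have "os \<noteq> []" using ne Gs(3) unfolding os_def by auto
  ultimately have "(\<lambda>j. comb os j / P1) \<in> NN"
    using outer unfolding schreier_closed_def by blast
  then show "(\<lambda>j. comb ps j / (P1 * P2)) \<in> NN"
    by (simp add: comb_os divide_divide_eq_left mult.commute)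
qed

lemma norming_finite_supp: "norming NN \<Longrightarrow> \<forall>x\<in>NN. finite (supp x)"
  unfolding norming_def by blast

lemma prod_list_pos: "\<forall>x\<in>set xs. 0 < f x \<Longrightarrow> 0 < (\<Prod>x\<leftarrow>xs. f x :: real)"
  by (induction xs) auto

lemma schreier_closed_iterated:
  assumes NN: "schreier_norming m n q NN" and q: "0 < q"
    and "ls \<noteq> []" "\<forall>l\<in>set ls. 1 \<le> l \<and> 0 < m (2*l)"
  shows "schreier_closed NN q (\<Sum>l\<leftarrow>ls. n (2*l)) (\<Prod>l\<leftarrow>ls. real (m (2*l)))"
  using assms(3,4)
proof (induction ls rule: list_nonempty_induct)
  case (single l)
  then show ?case using schreier_closed_level[OF NN q] by simp
next
  case (cons l ls)
  have "0 < (\<Prod>l\<leftarrow>ls. real (m (2*l)))" using cons.prems by (intro prod_list_pos) auto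
  then show ?case
    using schreier_closed_compose[OF q schreier_closed_level[OF NN q] cons.IH] cons.prems by simp
qed

definition repeated_indices :: "(nat \<Rightarrow> nat) \<Rightarrow> nat \<Rightarrow> nat list" where
  "repeated_indices a k = concat (map (\<lambda>l. replicate (a l) l) [1..<k])"

lemma sum_list_repeated_indices:
  "(\<Sum>l\<leftarrow>repeated_indices a k. g l) = (\<Sum>l\<in>{1..<k}. a l * g l)"
  unfolding repeated_indices_def sum_list_map_concat
  by (simp add: o_def sum_list_replicate sum.distinct_set_conv_list[symmetric])

lemma prod_list_repeated_indices:
  "(\<Prod>l\<leftarrow>repeated_indices a k. h l) = (\<Prod>l\<in>{1..<k}. h l ^ a l)"
  for h :: "nat \<Rightarrow> 'a::comm_monoid_mult"
  unfolding repeated_indices_def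
  by (induction k) (simp_all add: o_def prod_list_replicate)

text \<open>A norming set contains the zero functional (the restriction to the empty interval).\<close>
lemma zero_in_norming: "norming NN \<Longrightarrow> (\<lambda>j. 0) \<in> NN"
proof -
  assume "norming NN"
  then have "restr {} (unit_fnl 1) \<in> NN" unfolding norming_def is_interval_def by auto
  then show ?thesis by (simp add: restr_def)
qed

lemma qmass_filter_le: "qmass q (filter P ps) \<le> qmass q ps"
  unfolding qmass_def by (induction ps) (auto simp: add_increasing)

lemma block_family_of_admissible:
  assumes "norming NN" "0 < q" "set xs \<subseteq> NN" "admissible N xs"
    and "length \<beta> = length xs" "in_ball q 1 \<beta>"
  obtains ps where "block_family NN q ps" "start ` set ps \<in> schreier N" "comb ps = lin_comb \<beta> xs"
proof
  let ?all = "zip \<beta> xs"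
  define ps where "ps = filter (\<lambda>p. fst p \<noteq> 0 \<and> supp (snd p) \<noteq> {}) ?all"
  have members: "fst p \<noteq> 0" "supp (snd p) \<noteq> {}" "snd p \<in> set xs" if "p \<in> set ps" for p
  proof -
    have p: "p \<in> set ?all" "fst p \<noteq> 0" "supp (snd p) \<noteq> {}" using that unfolding ps_def by auto
    then show "fst p \<noteq> 0" "supp (snd p) \<noteq> {}" by simp_all
    show "snd p \<in> set xs" using p(1) by (metis prod.collapse set_zip_rightD)
  qed
  show "comb ps = lin_comb \<beta> xs"
    unfolding lin_comb_eq_comb[OF assms(5)] comb_def ps_def
    by (rule ext, rule sum_list_map_filter) (auto simp: supp_def)
  show "block_family NN q ps"
    unfolding block_family_def
  proof (intro conjI)
    show "set (map snd ps) \<subseteq> NN" using members assms(3) by auto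
    show "nondegenerate ps" unfolding nondegenerate_def
    proof
      fix p assume "p \<in> set ps"
      then show "fst p \<noteq> 0 \<and> supp (snd p) \<noteq> {} \<and> finite (supp (snd p))"
        using members[OF \<open>p \<in> set ps\<close>] norming_finite_supp[OF assms(1)] assms(3) by blast
    qed
    have "map (\<lambda>p. supp (snd p)) ?all = map supp (map snd ?all)" by simp
    also have "map snd ?all = xs" using assms(5) by simp
    finally have "sorted_wrt precedes ?all"
      using assms(4) unfolding admissible_def block_seq_def successive_iff_sorted sorted_precedes_iff
      by simp
    then show "sorted_wrt precedes ps" unfolding ps_def by (rule sorted_wrt_filter)
    have "qmass q ?all \<le> 1" using in_ball_iff_qmass[OF assms(2), of ?all] assms(5,6) by simp
    then show "qmass q ps \<le> 1" unfolding ps_def using qmass_filter_le order_trans by blast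
  qed
  have "start ` set ps \<subseteq> {Min (supp x) | x. x \<in> set xs \<and> supp x \<noteq> {}}"
  proof
    fix s assume "s \<in> start ` set ps"
    then obtain p where "p \<in> set ps" "s = Min (supp (snd p))" unfolding start_def by blast
    then show "s \<in> {Min (supp x) | x. x \<in> set xs \<and> supp x \<noteq> {}}" using members by blast
  qed
  then show "start ` set ps \<in> schreier N"
    using assms(4) schreier_hereditary unfolding admissible_def by blast
qed

text \<open>A family that becomes empty after discarding zero terms has combination 0.\<close>
theorem mainTheorem7:
  fixes m n :: "nat \<Rightarrow> nat" and q :: real and NN :: "fnl set"
    and k :: nat and a :: "nat \<Rightarrow> nat" and xs :: "fnl list" and \<beta> :: "real list"
  assumes "MN_sequences m n"
    and "1 < q"
    and "schreier_norming m n q NN"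
    and "k \<ge> 2"
    and "\<exists>l\<in>{1..<k}. a l \<noteq> 0"
    and "xs \<noteq> []"
    and "set xs \<subseteq> NN"
    and "admissible (\<Sum>l\<in>{1..<k}. a l * n (2*l)) xs"
    and "length \<beta> = length xs"
    and "in_ball q 1 \<beta>"
  shows "(\<lambda>j. (1 / real (\<Prod>l\<in>{1..<k}. m (2*l) ^ a l)) * lin_comb \<beta> xs j) \<in> NN"
proof -
  let ?N = "\<Sum>l\<in>{1..<k}. a l * n (2*l)" and ?P = "\<Prod>l\<in>{1..<k}. real (m (2*l)) ^ a l"
  have q: "0 < q" using assms(2) by simp
  have norming: "norming NN" using assms(3) unfolding schreier_norming_def by blast
  obtain ps where ps: "block_family NN q ps" "start ` set ps \<in> schreier ?N"
    and comb: "comb ps = lin_comb \<beta> xs"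
    using block_family_of_admissible[OF norming q assms(7-10)] .
  have m_pos: "\<forall>i\<ge>1. 1 \<le> m i" using assms(1) unfolding MN_sequences_def by blast
  have indices: "set (repeated_indices a k) \<subseteq> {1..<k}" "repeated_indices a k \<noteq> []"
    using assms(5) unfolding repeated_indices_def by auto
  then have "\<forall>l\<in>set (repeated_indices a k). 1 \<le> l \<and> 0 < m (2*l)"
    using m_pos by (fastforce dest: spec[of _ "2 * _"])
  from schreier_closed_iterated[OF assms(3) q indices(2) this]
  have "schreier_closed NN q ?N ?P"
    by (simp add: sum_list_repeated_indices prod_list_repeated_indices)
  then have "ps \<noteq> [] \<Longrightarrow> (\<lambda>j. comb ps j / ?P) \<in> NN"
    using ps unfolding schreier_closed_def by blast
  moreover have "ps = [] \<Longrightarrow> lin_comb \<beta> xs = (\<lambda>j. 0)" using comb by (auto simp: comb_def)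
  ultimately show ?thesis
    using comb zero_in_norming[OF norming] by (cases "ps = []") auto
qed

end
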